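(* Let $0<\delta<1/\mathrm{e}$ and $\beta>0$, and let $k,m,w$ be positive integers with $m\le w$ and $k\ge m\ge \frac{2\mathrm{e}}{(1-\mathrm{e}\delta)^2}\left(1+\left(\beta+\tfrac12\right)\ln k\right)$. If $m$ balls are thrown independently and uniformly at random into $w$ bins, then the probability that the number of bins containing exactly one ball is less than $\delta m$ is at most $k^{-\beta}$. *)

theory Defs
  imports "HOL-Probability.Probability"
begin

definition balls_into_bins :: "nat \<Rightarrow> nat \<Rightarrow> (nat \<Rightarrow> nat) pmf" where
  "balls_into_bins m w = pmf_of_set ({..<m} \<rightarrow>\<^sub>E {..<w})"

definition singleton_bins :: "nat \<Rightarrow> nat \<Rightarrow> (nat \<Rightarrow> nat) \<Rightarrow> nat" where
  "singleton_bins m w f = card {b \<in> {..<w}. card {i \<in> {..<m}. f i = b} = 1}"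

end

theory Submission imports Defs begin

(* Let S(f) be the number of bins holding exactly one ball.  For 0 < x <= 1 the
   Chernoff/Markov argument gives  P(S < a) <= x^(-a) * E[x^S].  The expectation
   E[x^S] is a normalised "occupancy sum"  sum over f of prod over bins b of
   g(load of b), with g 1 = x and g c = 1 otherwise.  Splitting off the last bin
   gives a recursion over subsets of balls, from which we show by induction on w
   that this sum is at most  G^w * m! / l^m  whenever every partial exponential
   series  sum_j g j l^j / j!  is bounded by G; with l = m/w and
   G = e^l - (1 - x) l  this yields  E[x^S] <= exp(m - (1-x) m e^(-m/w)) m!/m^m.
   A Stirling-type bound  m! <= e sqrt m (m/e)^m  and the elementary estimate
   x ln x >= (x^2 - 1)/2  then reduce the theorem, with x = e*delta, to the
   arithmetic of the hypothesis on m. *)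

section \<open>Elementary real inequalities\<close>

lemma exp_partial_sum_le:
  fixes l :: real assumes "0 \<le> l"
  shows "(\<Sum>n\<le>k. l ^ n / fact n) \<le> exp l"
  using assms summable_exp_generic[of l]
  by (auto simp: exp_def divide_inverse ac_simps intro!: sum_le_suminf)

lemma ln_diff_lower_bound:
  fixes a b :: real assumes "0 < a" "a \<le> b"
  shows "2 * (b - a) / (a + b) \<le> ln b - ln a"
proof -
  let ?f = "\<lambda>x. ln x - ln a - 2 * (x - a) / (a + x)"
  have "?f a \<le> ?f b"
  proof (rule DERIV_nonneg_imp_nondecreasing[OF assms(2)])
    fix x assume x: "a \<le> x" "x \<le> b"
    hence xp: "x > 0" using assms by auto
    have "DERIV ?f x :> (1/x - 0 - (2 * (a + x) - 2 * (x - a)) / (a + x)^2)"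
      using xp assms by (auto intro!: derivative_eq_intros simp: power2_eq_square)
    moreover have "1/x - 0 - (2 * (a + x) - 2 * (x - a)) / (a + x)^2 = (x - a)^2 / (x * (a+x)^2)"
      using xp assms by (simp add: divide_simps power2_eq_square) (simp add: algebra_simps)
    moreover have "(x - a)^2 / (x * (a+x)^2) \<ge> 0" using xp by simp
    ultimately show "\<exists>y. DERIV ?f x :> y \<and> y \<ge> 0" by metis
  qed
  thus ?thesis by simp
qed

lemma ln_lower_bound:
  fixes x :: real assumes "0 < x" "x \<le> 1"
  shows "(x - 1/x) / 2 \<le> ln x"
proof -
  let ?f = "\<lambda>x. ln x - (x - 1/x) / 2"
  have "?f x \<ge> ?f 1"
  proof (rule DERIV_nonpos_imp_nonincreasing[OF assms(2)])
    fix y assume y: "x \<le> y" "y \<le> 1"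
    hence yp: "y > 0" using assms by auto
    have "DERIV ?f y :> (1/y - (1 + 1/y^2) / 2)"
      using yp by (auto intro!: derivative_eq_intros simp: power2_eq_square field_simps)
    moreover have "1/y - (1 + 1/y^2) / 2 = - ((y - 1)^2 / (2 * y^2))"
      using yp by (simp add: field_simps power2_eq_square)
    moreover have "- ((y - 1)^2 / (2 * y^2)) \<le> 0" by simp
    ultimately show "\<exists>z. DERIV ?f y :> z \<and> z \<le> 0" by metis
  qed
  thus ?thesis by simp
qed

lemma neg_x_ln_x_bound:
  fixes x :: real assumes "0 < x" "x \<le> 1"
  shows "- (x * ln x) - (1 - x) \<le> - ((1 - x)^2 / 2)"
proof -
  have "x * ((x - 1/x) / 2) \<le> x * ln x"
    using ln_lower_bound[OF assms] assms by (intro mult_left_mono) auto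
  moreover have "x * ((x - 1/x) / 2) = (x^2 - 1) / 2"
    using assms by (simp add: field_simps power2_eq_square)
  ultimately show ?thesis by (simp add: power2_eq_square field_simps)
qed

text \<open>Stirling-type upper bound \<open>m! \<le> e \<surd>m (m/e)^m\<close>, in logarithmic form.\<close>
lemma ln_fact_upper_bound:
  assumes "m \<ge> 1"
  shows "ln (fact m) + real m - real m * ln (real m) \<le> 1 + ln (real m) / 2"
  using assms
proof (induction m rule: nat_induct_at_least)
  case base
  then show ?case by simp
next
  case (Suc n)
  have "2 / (2 * real n + 1) \<le> ln (real (Suc n)) - ln (real n)"
    using ln_diff_lower_bound[of "real n" "real (Suc n)"] Suc by simp
  hence "(real n + 1/2) * (2 / (2 * real n + 1)) \<le> (real n + 1/2) * (ln (real (Suc n)) - ln (real n))"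
    by (intro mult_left_mono) auto
  moreover have "(real n + 1/2) * (2 / (2 * real n + 1)) = 1" by (simp add: field_simps)
  moreover have "ln (fact (Suc n)) = ln (real (Suc n)) + ln (fact n)"
    by (simp add: ln_mult del: of_nat_Suc)
  ultimately show ?case using Suc.IH by (simp add: algebra_simps)
qed

lemma fact_div_power_le:
  assumes "m > 0"
  shows "fact m / real m ^ m \<le> exp (1 + ln (real m) / 2 - real m)"
proof -
  have "(fact m :: real) = exp (ln (fact m))" by simp
  also have "\<dots> \<le> exp (1 + ln (real m) / 2 - real m + real m * ln (real m))"
    using ln_fact_upper_bound[of m] assms by (subst exp_le_cancel_iff) simp
  also have "\<dots> = exp (1 + ln (real m) / 2 - real m) * real m ^ m"
    using assms by (simp add: exp_add exp_of_nat_mult)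
  finally show ?thesis using assms by (simp add: field_simps)
qed

section \<open>Occupancy sums\<close>

definition bin_load :: "nat set \<Rightarrow> (nat \<Rightarrow> nat) \<Rightarrow> nat \<Rightarrow> nat" where
  "bin_load B f b = card {i\<in>B. f i = b}"

definition occupancy_sum :: "(nat \<Rightarrow> real) \<Rightarrow> nat set \<Rightarrow> nat \<Rightarrow> real" where
  "occupancy_sum g B w = (\<Sum>f\<in>B \<rightarrow>\<^sub>E {..<w}. \<Prod>b<w. g (bin_load B f b))"

text \<open>Splitting off the last bin: a placement into \<open>w + 1\<close> bins is the set \<open>S\<close> of
  balls in bin \<open>w\<close> together with a placement of the remaining balls into \<open>w\<close> bins.\<close>
lemma occupancy_sum_Suc:
  assumes "finite B"
  shows "occupancy_sum g B (Suc w) = (\<Sum>S\<in>Pow B. g (card S) * occupancy_sum g (B - S) w)"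
proof -
  let ?T = "Sigma (Pow B) (\<lambda>S. (B - S) \<rightarrow>\<^sub>E {..<w})"
  let ?merge = "\<lambda>(S, h). (\<lambda>x. if x \<in> S then w else h x)"
  let ?split = "\<lambda>f. ({i\<in>B. f i = w}, restrict f (B - {i\<in>B. f i = w}))"
  have "(\<Sum>S\<in>Pow B. g (card S) * occupancy_sum g (B - S) w) =
        (\<Sum>(S,h)\<in>?T. g (card S) * (\<Prod>b<w. g (bin_load (B - S) h b)))"
    unfolding occupancy_sum_def sum_distrib_left using assms
    by (subst sum.Sigma) (auto intro: finite_PiE)
  also have "\<dots> = (\<Sum>f\<in>B \<rightarrow>\<^sub>E {..<Suc w}. \<Prod>b<Suc w. g (bin_load B f b))"
  proof (rule sum.reindex_bij_witness[where i = ?split and j = ?merge])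
    fix a assume "a \<in> ?T"
    then obtain S h where ah: "a = (S, h)" "S \<subseteq> B" "h \<in> (B - S) \<rightarrow>\<^sub>E {..<w}" by auto
    have hw: "x \<in> B - S \<Longrightarrow> h x < w" for x using ah(3) by auto
    have hu: "x \<notin> B - S \<Longrightarrow> h x = undefined" for x using ah(3) by auto
    have S_eq: "{i\<in>B. ?merge a i = w} = S" using ah hw by force
    show "?split (?merge a) = a" using ah hu by (auto simp: S_eq restrict_def fun_eq_iff)
    show "?merge a \<in> B \<rightarrow>\<^sub>E {..<Suc w}"
      using ah hw hu by (auto simp: PiE_def extensional_def less_Suc_eq)
    have last_bin: "bin_load B (?merge a) w = card S" unfolding bin_load_def using S_eq by simp
    have other_bins: "bin_load B (?merge a) b = bin_load (B - S) h b" if "b < w" for b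
      unfolding bin_load_def using ah that by (intro arg_cong[where f=card]) auto
    show "(\<Prod>b<Suc w. g (bin_load B (?merge a) b))
            = (case a of (S, h) \<Rightarrow> g (card S) * (\<Prod>b<w. g (bin_load (B - S) h b)))"
      using last_bin other_bins ah(1) by (simp add: lessThan_Suc prod.insert)
  next
    fix f assume f: "f \<in> B \<rightarrow>\<^sub>E {..<Suc w}"
    show "?merge (?split f) = f" using f by (auto simp: fun_eq_iff PiE_def extensional_def)
    show "?split f \<in> ?T" using f by (auto simp: PiE_def extensional_def less_Suc_eq)
  qed
  finally show ?thesis unfolding occupancy_sum_def by simp
qed

lemma sum_Pow_weighted_by_card:
  fixes \<phi> :: "nat \<Rightarrow> real"
  assumes "finite B"
  shows "(\<Sum>S\<in>Pow B. \<phi> (card S) * fact (card B - card S) / fact (card B))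
           = (\<Sum>j\<le>card B. \<phi> j / fact j)"
proof -
  let ?\<psi> = "\<lambda>j. \<phi> j * fact (card B - j) / fact (card B)"
  have "(\<Sum>S\<in>Pow B. ?\<psi> (card S)) = (\<Sum>j\<le>card B. \<Sum>S\<in>{S\<in>Pow B. card S = j}. ?\<psi> (card S))"
    using assms by (intro sum.group[symmetric]) (auto intro: card_mono)
  also have "\<dots> = (\<Sum>j\<le>card B. real (card B choose j) * ?\<psi> j)"
  proof (rule sum.cong[OF refl])
    fix j
    have "(\<Sum>S\<in>{S\<in>Pow B. card S = j}. ?\<psi> (card S)) = real (card {S. S \<subseteq> B \<and> card S = j}) * ?\<psi> j"
      by simp
    thus "(\<Sum>S\<in>{S\<in>Pow B. card S = j}. ?\<psi> (card S)) = real (card B choose j) * ?\<psi> j"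
      using n_subsets[OF assms] by simp
  qed
  also have "\<dots> = (\<Sum>j\<le>card B. \<phi> j / fact j)"
    by (rule sum.cong[OF refl]) (simp add: binomial_fact field_simps)
  finally show ?thesis .
qed

text \<open>The central estimate: if every partial sum of \<open>\<Sum>j. g j * l^j / j!\<close> is at most
  \<open>G\<close>, then the occupancy sum over \<open>w\<close> bins is at most \<open>G^w * n! / l^n\<close> with \<open>n = |B|\<close>.
  (It bounds the coefficient of \<open>l^n/n!\<close> in the \<open>w\<close>-th power of the exponential
  generating function of \<open>g\<close>.)\<close>
lemma occupancy_sum_bound:
  assumes "finite B" "\<And>c. g c \<ge> 0" "l > 0" "\<And>n. (\<Sum>j\<le>n. g j * l ^ j / fact j) \<le> G"
  shows "occupancy_sum g B w * l ^ card B / fact (card B) \<le> G ^ w"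
  using assms(1)
proof (induction w arbitrary: B)
  case 0
  have "occupancy_sum g B 0 = real (card (B \<rightarrow>\<^sub>E ({}::nat set)))"
    unfolding occupancy_sum_def by simp
  also have "\<dots> = (if B = {} then 1 else 0)" using 0 by (simp add: card_PiE card_gt_0_iff)
  finally show ?case by simp
next
  case (Suc w)
  define n where "n = card B"
  have G_nonneg: "G \<ge> 0" using assms(2)[of 0] assms(4)[of 0] by simp
  have term_bound: "g (card S) * occupancy_sum g (B - S) w * l ^ n / fact n
      \<le> G ^ w * (g (card S) * l ^ card S * fact (n - card S) / fact n)" if "S \<in> Pow B" for S
  proof -
    have sn: "card S \<le> n" and card_rest: "card (B - S) = n - card S"
      unfolding n_def using that Suc.prems by (auto intro: card_mono simp: card_Diff_subset finite_subset)
    have "occupancy_sum g (B - S) w * l ^ (n - card S) / fact (n - card S) \<le> G ^ w"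
      using Suc.IH[of "B - S"] Suc.prems card_rest by simp
    hence "occupancy_sum g (B - S) w * l ^ (n - card S) \<le> G ^ w * fact (n - card S)"
      by (simp add: field_simps)
    hence "occupancy_sum g (B - S) w * l ^ (n - card S) * l ^ card S
           \<le> G ^ w * fact (n - card S) * l ^ card S"
      using assms(3) by (intro mult_right_mono) auto
    moreover have "l ^ n = l ^ (n - card S) * l ^ card S" using sn by (simp flip: power_add)
    ultimately have IH: "occupancy_sum g (B - S) w * l ^ n \<le> G ^ w * fact (n - card S) * l ^ card S"
      by (simp add: mult.assoc)
    have "g (card S) * (occupancy_sum g (B - S) w * l ^ n)
          \<le> g (card S) * (G ^ w * fact (n - card S) * l ^ card S)"
      using IH assms(2) by (rule mult_left_mono)
    thus ?thesis by (simp add: field_simps)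
  qed
  have "occupancy_sum g B (Suc w) * l ^ n / fact n
        = (\<Sum>S\<in>Pow B. g (card S) * occupancy_sum g (B - S) w * l ^ n / fact n)"
    by (simp add: occupancy_sum_Suc Suc.prems sum_distrib_right sum_divide_distrib)
  also have "\<dots> \<le> G ^ w * (\<Sum>S\<in>Pow B. g (card S) * l ^ card S * fact (n - card S) / fact n)"
    unfolding sum_distrib_left using term_bound by (rule sum_mono)
  also have "(\<Sum>S\<in>Pow B. g (card S) * l ^ card S * fact (n - card S) / fact n)
             = (\<Sum>j\<le>n. g j * l ^ j / fact j)"
    using sum_Pow_weighted_by_card[OF Suc.prems, of "\<lambda>j. g j * l ^ j"] by (simp add: n_def)
  also have "G ^ w * (\<Sum>j\<le>n. g j * l ^ j / fact j) \<le> G ^ w * G"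
    using G_nonneg assms(4) by (intro mult_left_mono) auto
  finally show ?case unfolding n_def by (simp add: mult.commute)
qed

lemma occupancy_sum_singletons:
  "occupancy_sum (\<lambda>c. if c = 1 then x else 1) {..<m} w
     = (\<Sum>f\<in>{..<m} \<rightarrow>\<^sub>E {..<w}. x ^ singleton_bins m w f)"
  unfolding occupancy_sum_def
proof (rule sum.cong[OF refl])
  fix f
  let ?single = "{b. bin_load {..<m} f b = 1}"
  have "(\<Prod>b<w. if bin_load {..<m} f b = 1 then x else 1)
        = (\<Prod>b\<in>{..<w} \<inter> ?single. x) * (\<Prod>b\<in>{..<w} \<inter> - ?single. 1)"
    by (subst prod.If_cases) auto
  also have "\<dots> = x ^ singleton_bins m w f"
    unfolding singleton_bins_def bin_load_def
    by (simp, intro arg_cong[where f="\<lambda>n. x ^ n"] arg_cong[where f=card]) auto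
  finally show "(\<Prod>b<w. if bin_load {..<m} f b = 1 then x else 1) = x ^ singleton_bins m w f" .
qed

section \<open>Probabilistic estimates\<close>

lemma prob_few_singletons_le:
  fixes x a :: real
  assumes "0 < x" "x \<le> 1" "w > 0"
  shows "measure_pmf.prob (balls_into_bins m w) {f. real (singleton_bins m w f) < a}
           \<le> x powr (- a) * ((\<Sum>f\<in>{..<m} \<rightarrow>\<^sub>E {..<w}. x ^ singleton_bins m w f) / real w ^ m)"
proof -
  define PS where "PS = {..<m} \<rightarrow>\<^sub>E {..<w}"
  define E where "E = {f. real (singleton_bins m w f) < a}"
  have "finite PS" and "PS \<noteq> {}" and card_PS: "card PS = w ^ m"
    unfolding PS_def using assms(3) by (auto simp: finite_PiE PiE_eq_empty_iff card_PiE)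
  hence prob_eq: "measure_pmf.prob (balls_into_bins m w) E = real (card (PS \<inter> E)) / real w ^ m"
    unfolding balls_into_bins_def PS_def[symmetric] by (simp add: measure_pmf_of_set)
  have "real (card (PS \<inter> E)) = (\<Sum>f\<in>PS \<inter> E. 1)" by simp
  also have "\<dots> \<le> (\<Sum>f\<in>PS \<inter> E. x powr (real (singleton_bins m w f) - a))"
  proof (rule sum_mono)
    fix f assume "f \<in> PS \<inter> E"
    hence "real (singleton_bins m w f) - a \<le> 0" unfolding E_def by auto
    moreover have "ln x \<le> 0" using assms by simp
    ultimately have "0 \<le> (real (singleton_bins m w f) - a) * ln x" by (simp add: mult_nonpos_nonpos)
    thus "1 \<le> x powr (real (singleton_bins m w f) - a)" using assms by (simp add: powr_def)
  qed
  also have "\<dots> \<le> (\<Sum>f\<in>PS. x powr (real (singleton_bins m w f) - a))"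
    using \<open>finite PS\<close> by (intro sum_mono2) auto
  also have "\<dots> = x powr (- a) * (\<Sum>f\<in>PS. x ^ singleton_bins m w f)"
    unfolding sum_distrib_left using assms
    by (intro sum.cong) (auto simp: powr_diff powr_realpow powr_minus field_simps)
  finally show ?thesis
    unfolding prob_eq E_def[symmetric] PS_def[symmetric] using assms(3)
    by (simp add: divide_right_mono)
qed

lemma singleton_weight_series_le:
  fixes x l :: real
  assumes "0 \<le> x" "0 \<le> l"
  shows "(\<Sum>j\<le>n. (if j = 1 then x else 1) * l ^ j / fact j) \<le> exp l - (1 - x) * l"
proof (cases "n = 0")
  case True
  have "1 + l \<le> exp l" by (rule exp_ge_add_one_self)
  moreover have "(1 - x) * l \<le> l" using assms by (simp add: algebra_simps)
  moreover have "(\<Sum>j\<le>n. (if j = 1 then x else 1) * l ^ j / fact j) = 1" using True by simp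
  ultimately show ?thesis by linarith
next
  case False
  have "(\<Sum>j\<le>n. (if j = 1 then x else 1) * l ^ j / fact j)
        = (\<Sum>j\<le>n. l ^ j / fact j - (if j = 1 then (1 - x) * l else 0))"
    by (rule sum.cong) (auto simp: field_simps)
  also have "\<dots> = (\<Sum>j\<le>n. l ^ j / fact j) - (1 - x) * l"
    using False by (simp add: sum_subtractf)
  also have "\<dots> \<le> exp l - (1 - x) * l" using exp_partial_sum_le[OF assms(2), of n] by simp
  finally show ?thesis .
qed

lemma exp_minus_linear_le:
  fixes x l :: real
  shows "exp l - (1 - x) * l \<le> exp (l - (1 - x) * l * exp (- l))"
proof -
  have "exp l - (1 - x) * l = exp l * (1 - (1 - x) * l * exp (- l))"
    by (simp add: field_simps exp_minus)
  also have "\<dots> \<le> exp l * exp (- ((1 - x) * l * exp (- l)))"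
    using exp_ge_add_one_self[of "- ((1 - x) * l * exp (- l))"] by (intro mult_left_mono) auto
  also have "\<dots> = exp (l - (1 - x) * l * exp (- l))" by (simp add: exp_add[symmetric])
  finally show ?thesis .
qed

lemma singleton_bins_pgf_bound:
  fixes x :: real
  assumes "0 < x" "x \<le> 1" "m > 0" "w > 0"
  shows "(\<Sum>f\<in>{..<m} \<rightarrow>\<^sub>E {..<w}. x ^ singleton_bins m w f) / real w ^ m
           \<le> exp (real m - (1 - x) * real m * exp (- (real m / real w))) * (fact m / real m ^ m)"
proof -
  define l where "l = real m / real w"
  define g where "g = (\<lambda>c::nat. if c = 1 then x else 1)"
  define G where "G = exp l - (1 - x) * l"
  have l_pos: "0 < l" unfolding l_def using assms by auto
  have partial_sums: "(\<Sum>j\<le>n. g j * l ^ j / fact j) \<le> G" for n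
    unfolding g_def G_def using singleton_weight_series_le[of x l n] assms l_pos by simp
  have G_ge_1: "G \<ge> 1" using partial_sums[of 0] by (simp add: g_def)
  have "occupancy_sum g {..<m} w * l ^ m / fact m \<le> G ^ w"
    using occupancy_sum_bound[of "{..<m}" g l G w] assms l_pos partial_sums
    by (simp add: g_def)
  hence "occupancy_sum g {..<m} w / real w ^ m \<le> G ^ w * fact m / (l ^ m * real w ^ m)"
    using l_pos assms by (simp add: field_simps)
  also have "l ^ m * real w ^ m = real m ^ m"
    unfolding l_def using assms by (simp flip: power_mult_distrib)
  finally have pgf_le: "occupancy_sum g {..<m} w / real w ^ m \<le> G ^ w * (fact m / real m ^ m)"
    by simp
  have "G ^ w \<le> exp (l - (1 - x) * l * exp (- l)) ^ w"
    using G_ge_1 exp_minus_linear_le[of l x] unfolding G_def by (intro power_mono) auto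
  also have "\<dots> = exp (real m - (1 - x) * real m * exp (- (real m / real w)))"
    unfolding l_def using assms by (simp add: field_simps flip: exp_of_nat_mult)
  finally have "G ^ w * (fact m / real m ^ m)
      \<le> exp (real m - (1 - x) * real m * exp (- (real m / real w))) * (fact m / real m ^ m)"
    by (rule mult_right_mono) simp
  with pgf_le show ?thesis
    unfolding g_def occupancy_sum_singletons by linarith
qed

lemma few_singletons_tail_bound:
  fixes x :: real
  assumes "0 < x" "x < 1" "m > 0" "w > 0" "m \<le> w"
  defines "c \<equiv> real m * exp (- 1)"
  shows "measure_pmf.prob (balls_into_bins m w) {f. real (singleton_bins m w f) < c * x}
           \<le> exp (1 + ln (real m) / 2 - c * (1 - x)^2 / 2)"
proof -
  have load_term: "exp (real m - (1 - x) * real m * exp (- (real m / real w)))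
                     \<le> exp (real m - (1 - x) * c)"
    unfolding c_def using assms by (auto intro!: mult_left_mono)
  let ?pgf = "(\<Sum>f\<in>{..<m} \<rightarrow>\<^sub>E {..<w}. x ^ singleton_bins m w f) / real w ^ m"
  have "measure_pmf.prob (balls_into_bins m w) {f. real (singleton_bins m w f) < c * x}
        \<le> x powr (- (c * x)) * ?pgf"
    using prob_few_singletons_le[of x w m] assms by simp
  also have "\<dots> \<le> x powr (- (c * x))
      * (exp (real m - (1 - x) * real m * exp (- (real m / real w))) * (fact m / real m ^ m))"
    using singleton_bins_pgf_bound[of x m w] assms by (intro mult_left_mono) auto
  also have "\<dots> \<le> x powr (- (c * x)) * (exp (real m - (1 - x) * c) * exp (1 + ln (real m) / 2 - real m))"
    using load_term fact_div_power_le[OF assms(3)] by (intro mult_left_mono mult_mono) auto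
  also have "\<dots> = exp (1 + ln (real m) / 2 + c * (- (x * ln x) - (1 - x)))"
    using assms(1) by (simp add: powr_def flip: exp_add) (simp add: algebra_simps)
  also have "\<dots> \<le> exp (1 + ln (real m) / 2 - c * (1 - x)^2 / 2)"
    using mult_left_mono[OF neg_x_ln_x_bound[of x], of c] assms by (simp add: c_def)
  finally show ?thesis .
qed

text \<open>With \<open>x = e \<delta>\<close> the threshold \<open>\<delta> m\<close> equals \<open>c x\<close>, and the hypothesis on \<open>m\<close>
  together with \<open>m \<le> k\<close> makes the exponent at most \<open>-\<beta> ln k\<close>.\<close>
theorem mainTheorem2:
  fixes \<delta> \<beta> :: real and k m w :: nat
  assumes "0 < \<delta>" and "\<delta> < 1 / exp 1" and "\<beta> > 0"
    and "k > 0" and "m > 0" and "w > 0" and "m \<le> w" and "m \<le> k"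
    and "real m \<ge> 2 * exp 1 / (1 - exp 1 * \<delta>)^2 * (1 + (\<beta> + 1/2) * ln (real k))"
  shows "measure_pmf.prob (balls_into_bins m w)
           {f. real (singleton_bins m w f) < \<delta> * real m} \<le> real k powr (- \<beta>)"
proof -
  define x where "x = exp 1 * \<delta>"
  define c where "c = real m * exp (- 1)"
  have x_pos: "0 < x" and x_lt_1: "x < 1"
    unfolding x_def using assms(1,2) by (auto simp: field_simps)
  have threshold: "\<delta> * real m = c * x" unfolding c_def x_def by (simp add: exp_minus field_simps)
  have "measure_pmf.prob (balls_into_bins m w) {f. real (singleton_bins m w f) < \<delta> * real m}
        \<le> exp (1 + ln (real m) / 2 - c * (1 - x)^2 / 2)"
    unfolding threshold c_def using few_singletons_tail_bound x_pos x_lt_1 assms(5-7) by blast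
  also have "\<dots> \<le> exp (- \<beta> * ln (real k))"
  proof -
    have "1 + (\<beta> + 1/2) * ln (real k) \<le> c * (1 - x)^2 / 2"
      using assms(9) x_lt_1 unfolding c_def x_def[symmetric] by (simp add: exp_minus field_simps)
    moreover have "ln (real m) \<le> ln (real k)" using assms(5,8) by simp
    ultimately show ?thesis by (simp add: algebra_simps)
  qed
  also have "\<dots> = real k powr (- \<beta>)" using assms(4) by (simp add: powr_def)
  finally show ?thesis .
qed

end
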